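(* Let $\vec G=(G,\alpha,w)$ be a finite magnetic graph with vertex set $V$, and let $V_1\subseteq V_0\subseteq V$, $a\in\mathbb{N}$. Then the spectrum of the $a$-th frame member of $\vec G^+_{V_1}$ identified along $V_0$ satisfies $$\operatorname{spec}\big(F_a(\vec G^+_{V_1},V_0)\big)=\operatorname{spec}\big(\vec G^+_{V_1}\big)\uplus\operatorname{spec}\big(\vec G^+_{V_0}\big)^{(a-1)}.$$
   Context: A graph $G=(V,E,\partial)$: finite disjoint sets $V,E$, incidence $\partial e=(\partial_-e,\partial_+e)\in V\times V$, inversion $e\mapsto \bar e$ with $\bar{\bar e}=e$, $\bar e\ne e$, $\partial_\pm\bar e=\partial_\mp e$; loops and multiple edges allowed; $E_v=\{e:\partial_-e=v\}$, $\deg v=|E_v|>0$. A magnetic graph $\vec G=(G,\alpha,w)$ has weights $w:E\to(0,\infty)$ with $w_{\bar e}=w_e$ and magnetic potential $\alpha:E\to\mathbb{R}/2\pi\mathbb{Z}$ with $\alpha_{\bar e}=-\alpha_e$; $\deg^w v=\sum_{e\in E_v}w_e$. The magnetic Laplacian on $\ell^2(V,\deg^w)$ (inner product $\langle f,g\rangle=\sum_v f(v)\overline{g(v)}\deg^w v$) is $(\Delta f)(v)=f(v)-\frac1{\deg^w v}\sum_{e\in E_v}w_e e^{i\alpha_e}f(\partial_+e)$. For $W\subseteq V$, the Dirichlet Laplacian is $\Delta^+_W=\iota_W^*\Delta\iota_W$ where $\iota_W:\ell^2(V\setminus W,\deg^w)\to\ell^2(V,\deg^w)$ extends by $0$; $\vec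 G^+_W$ denotes $\vec G$ with the vertices $W$ virtualised, and $\operatorname{spec}(\vec G^+_W)$ is the multiset of eigenvalues of $\Delta^+_W$ (with multiplicity); $\operatorname{spec}(\vec G)=\operatorname{spec}(\vec G^+_\emptyset)$. Frame member: $G^a$ is the disjoint union of $a$ copies $G\times\{j\}$, $j=1,\dots,a$; with $(v,i)\sim(v',j)$ iff $(v,i)=(v',j)$ or ($v=v'\in V_0$), $F_a(G,V_0)=G^a/\!\sim$ (vertices are classes, edges unchanged, incidence $e\mapsto([\partial_-e],[\partial_+e])$), and $F_a(\vec G,V_0)$ carries $w_{(e,j)}=w_e$, $\alpha_{(e,j)}=\alpha_e$. $F_a(\vec G^+_{V_1},V_0)$ is $F_a(\vec G,V_0)$ with the vertices $[(v_1,j)]$, $v_1\in V_1$, virtualised, i.e. its spectrum is that of the Dirichlet Laplacian of $F_a(\vec G,V_0)$ on these vertices. Multisets: $\uplus$ adds multiplicities; $M^{(k)}$ multiplies multiplicities by $k$ ($M^{(0)}$ is empty). *)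

theory Defs
  imports "Jordan_Normal_Form.Char_Poly" "HOL-Computational_Algebra.Polynomial"
begin

text \<open>A finite magnetic graph: vertices V, edges E, incidence (src, tgt) = (boundary_-, boundary_+),
  inversion flip, weights w, magnetic potential alpha (a real representative of an element of R/2piZ;
  only cis alpha enters the Laplacian, and the antisymmetry is required modulo 2pi).\<close>
definition magnetic_graph ::
  "'v set \<Rightarrow> 'e set \<Rightarrow> ('e \<Rightarrow> 'v) \<Rightarrow> ('e \<Rightarrow> 'v) \<Rightarrow> ('e \<Rightarrow> 'e) \<Rightarrow> ('e \<Rightarrow> real) \<Rightarrow> ('e \<Rightarrow> real) \<Rightarrow> bool"
where
  "magnetic_graph V E src tgt flip w \<alpha> \<longleftrightarrow>
     finite V \<and> finite E \<and>
     (\<forall>e\<in>E. src e \<in> V \<and> tgt e \<in> V \<and> flip e \<in> E \<and> flip (flip e) = e \<and> flip e \<noteq> e \<and>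
             src (flip e) = tgt e \<and> tgt (flip e) = src e \<and>
             w e > 0 \<and> w (flip e) = w e \<and> cis (\<alpha> (flip e)) = cis (- \<alpha> e)) \<and>
     (\<forall>v\<in>V. {e\<in>E. src e = v} \<noteq> {})"

definition wdeg :: "'e set \<Rightarrow> ('e \<Rightarrow> 'v) \<Rightarrow> ('e \<Rightarrow> real) \<Rightarrow> 'v \<Rightarrow> real" where
  "wdeg E src w v = (\<Sum>e\<in>{e\<in>E. src e = v}. w e)"

text \<open>Matrix coefficient of the magnetic Laplacian: (Delta f)(v) = sum_u lap_coeff v u * f u.\<close>
definition lap_coeff ::
  "'e set \<Rightarrow> ('e \<Rightarrow> 'v) \<Rightarrow> ('e \<Rightarrow> 'v) \<Rightarrow> ('e \<Rightarrow> real) \<Rightarrow> ('e \<Rightarrow> real) \<Rightarrow> 'v \<Rightarrow> 'v \<Rightarrow> complex"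
where
  "lap_coeff E src tgt w \<alpha> v u =
     (if v = u then 1 else 0)
     - (\<Sum>e\<in>{e\<in>E. src e = v \<and> tgt e = u}. complex_of_real (w e) * cis (\<alpha> e))
       / complex_of_real (wdeg E src w v)"

text \<open>Matrix of the Dirichlet Laplacian iota_W^* Delta iota_W w.r.t. the basis of indicator functions
  of V - W, enumerated by a (arbitrary) list; iota_W^* is restriction to V - W for the weighted
  inner product.\<close>
definition dirichlet_lap_mat ::
  "'v set \<Rightarrow> 'e set \<Rightarrow> ('e \<Rightarrow> 'v) \<Rightarrow> ('e \<Rightarrow> 'v) \<Rightarrow> ('e \<Rightarrow> real) \<Rightarrow> ('e \<Rightarrow> real) \<Rightarrow> 'v set \<Rightarrow> complex mat"
where
  "dirichlet_lap_mat V E src tgt w \<alpha> W =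
     (let xs = (SOME xs. distinct xs \<and> set xs = V - W)
      in mat (length xs) (length xs) (\<lambda>(i, j). lap_coeff E src tgt w \<alpha> (xs ! i) (xs ! j)))"

text \<open>spec of the graph with the vertices W virtualised: multiset of eigenvalues (with algebraic
  multiplicity) of the Dirichlet Laplacian.\<close>
definition dirichlet_spec ::
  "'v set \<Rightarrow> 'e set \<Rightarrow> ('e \<Rightarrow> 'v) \<Rightarrow> ('e \<Rightarrow> 'v) \<Rightarrow> ('e \<Rightarrow> real) \<Rightarrow> ('e \<Rightarrow> real) \<Rightarrow> 'v set \<Rightarrow> complex multiset"
where
  "dirichlet_spec V E src tgt w \<alpha> W = proots (char_poly (dirichlet_lap_mat V E src tgt w \<alpha> W))"

definition frame_rel :: "'v set \<Rightarrow> 'v set \<Rightarrow> nat \<Rightarrow> (('v \<times> nat) \<times> ('v \<times> nat)) set" where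
  "frame_rel V V0 a = {(x, y). x \<in> V \<times> {1..a} \<and> y \<in> V \<times> {1..a} \<and> (x = y \<or> (fst x = fst y \<and> fst x \<in> V0))}"

definition frame_cls :: "'v set \<Rightarrow> 'v set \<Rightarrow> nat \<Rightarrow> 'v \<times> nat \<Rightarrow> ('v \<times> nat) set" where
  "frame_cls V V0 a x = frame_rel V V0 a `` {x}"

definition frame_V :: "'v set \<Rightarrow> 'v set \<Rightarrow> nat \<Rightarrow> ('v \<times> nat) set set" where
  "frame_V V V0 a = (V \<times> {1..a}) // frame_rel V V0 a"

definition frame_E :: "'e set \<Rightarrow> nat \<Rightarrow> ('e \<times> nat) set" where
  "frame_E E a = E \<times> {1..a}"

definition frame_inc :: "'v set \<Rightarrow> 'v set \<Rightarrow> nat \<Rightarrow> ('e \<Rightarrow> 'v) \<Rightarrow> 'e \<times> nat \<Rightarrow> ('v \<times> nat) set" where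
  "frame_inc V V0 a s = (\<lambda>(e, j). frame_cls V V0 a (s e, j))"

definition frame_fun :: "('e \<Rightarrow> 'b) \<Rightarrow> 'e \<times> nat \<Rightarrow> 'b" where
  "frame_fun f = (\<lambda>(e, j). f e)"

definition frame_virt :: "'v set \<Rightarrow> 'v set \<Rightarrow> nat \<Rightarrow> 'v set \<Rightarrow> ('v \<times> nat) set set" where
  "frame_virt V V0 a V1 = {frame_cls V V0 a (v1, j) | v1 j. v1 \<in> V1 \<and> j \<in> {1..a}}"

definition frame_spec ::
  "'v set \<Rightarrow> 'e set \<Rightarrow> ('e \<Rightarrow> 'v) \<Rightarrow> ('e \<Rightarrow> 'v) \<Rightarrow> ('e \<Rightarrow> real) \<Rightarrow> ('e \<Rightarrow> real) \<Rightarrow> 'v set \<Rightarrow> 'v set \<Rightarrow> nat \<Rightarrow> complex multiset"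
where
  "frame_spec V E src tgt w \<alpha> V1 V0 a =
     dirichlet_spec (frame_V V V0 a) (frame_E E a) (frame_inc V V0 a src) (frame_inc V V0 a tgt)
       (frame_fun w) (frame_fun \<alpha>) (frame_virt V V0 a V1)"

definition mset_scale :: "nat \<Rightarrow> 'a multiset \<Rightarrow> 'a multiset" where
  "mset_scale k M = repeat_mset k M"

end

theory Submission
  imports Defs
begin

text \<open>Represent the vertices of the frame member that are not virtualised by \<open>(x, 1)\<close> for the glued
  vertices \<open>x \<in> V0 - V1\<close> and by the copies \<open>(x, i)\<close>, \<open>1 \<le> i \<le> a\<close>, of the vertices
  \<open>x \<in> V - V0\<close>. In these coordinates its Laplacian is an explicit block matrix built from the
  Laplacian of the graph. Replacing the basis vector of \<open>(x, 1)\<close>, \<open>x \<notin> V0\<close>, by the sum of all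
  copies of \<open>x\<close> makes it block triangular: on the symmetric vectors it acts as the Dirichlet
  Laplacian of \<open>G\<^sup>+\<^bsub>V1\<^esub>\<close>, and on each of the copies \<open>2, \<dots>, a\<close> as that of
  \<open>G\<^sup>+\<^bsub>V0\<^esub>\<close>. So the characteristic polynomial factorises accordingly, and the multisets of
  its roots add up.\<close>

section \<open>Characteristic polynomials of matrices indexed by finite sets\<close>

definition index_mat :: "'a list \<Rightarrow> 'b list \<Rightarrow> ('a \<Rightarrow> 'b \<Rightarrow> 'c) \<Rightarrow> 'c mat" where
  "index_mat xs ys f = mat (length xs) (length ys) (\<lambda>(i, j). f (xs ! i) (ys ! j))"

lemma index_mat_carrier [simp]: "index_mat xs ys f \<in> carrier_mat (length xs) (length ys)"
  unfolding index_mat_def by simp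

lemma index_mat_dim [simp]:
  "dim_row (index_mat xs ys f) = length xs" "dim_col (index_mat xs ys f) = length ys"
  unfolding index_mat_def by simp_all

lemma index_mat_cong:
  "(\<And>x y. x \<in> set xs \<Longrightarrow> y \<in> set ys \<Longrightarrow> f x y = g x y) \<Longrightarrow> index_mat xs ys f = index_mat xs ys g"
  unfolding index_mat_def by (intro eq_matI) auto

lemma index_mat_map: "index_mat (map h xs) (map h ys) f = index_mat xs ys (\<lambda>u v. f (h u) (h v))"
  unfolding index_mat_def by (intro eq_matI) auto

lemma index_mat_mult:
  assumes "distinct ys"
  shows "index_mat xs ys f * index_mat ys zs g = index_mat xs zs (\<lambda>x z. \<Sum>y\<in>set ys. f x y * g y z)"
proof (rule eq_matI)
  fix i j assume "i < dim_row (index_mat xs zs (\<lambda>x z. \<Sum>y\<in>set ys. f x y * g y z))"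
    "j < dim_col (index_mat xs zs (\<lambda>x z. \<Sum>y\<in>set ys. f x y * g y z))"
  then show "(index_mat xs ys f * index_mat ys zs g) $$ (i, j)
      = index_mat xs zs (\<lambda>x z. \<Sum>y\<in>set ys. f x y * g y z) $$ (i, j)"
    using sum_list_distinct_conv_sum_set[OF assms, of "\<lambda>y. f (xs ! i) y * g y (zs ! j)"]
    by (simp add: index_mat_def scalar_prod_def sum_list_sum_nth atLeast0LessThan)
qed auto

lemma index_mat_of_bool_eq:
  assumes "distinct xs"
  shows "index_mat xs xs (\<lambda>x y. of_bool (x = y)) = 1\<^sub>m (length xs)"
  using assms by (intro eq_matI) (auto simp: index_mat_def nth_eq_iff_index_eq)

lemma char_poly_index_mat_similar:
  fixes m :: "'a \<Rightarrow> 'a \<Rightarrow> 'c :: field" and n :: "'b \<Rightarrow> 'b \<Rightarrow> 'c"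
  assumes "distinct xs" "distinct ys" "length xs = length ys"
    and "\<And>x x'. x \<in> set xs \<Longrightarrow> x' \<in> set xs \<Longrightarrow>
      (\<Sum>y\<in>set ys. p x y * q y x') = of_bool (x = x')"
    and "\<And>x y. x \<in> set xs \<Longrightarrow> y \<in> set ys \<Longrightarrow>
      (\<Sum>x'\<in>set xs. m x x' * p x' y) = (\<Sum>y'\<in>set ys. p x y' * n y' y)"
  shows "char_poly (index_mat xs xs m) = char_poly (index_mat ys ys n)"
proof -
  let ?N = "length xs" and ?P = "index_mat xs ys p" and ?Q = "index_mat ys xs q"
  have carrier: "?P \<in> carrier_mat ?N ?N" "?Q \<in> carrier_mat ?N ?N"
    "index_mat xs xs m \<in> carrier_mat ?N ?N" "index_mat ys ys n \<in> carrier_mat ?N ?N"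
    using assms(3) index_mat_carrier by metis+
  have PQ: "?P * ?Q = 1\<^sub>m ?N"
    unfolding index_mat_mult[OF assms(2)] index_mat_of_bool_eq[OF assms(1), symmetric]
    by (rule index_mat_cong) (rule assms(4))
  have "index_mat xs xs m * ?P = ?P * index_mat ys ys n"
    unfolding index_mat_mult[OF assms(1)] index_mat_mult[OF assms(2)]
    by (rule index_mat_cong) (rule assms(5))
  then have "index_mat xs xs m * ?P * ?Q = ?P * index_mat ys ys n * ?Q"
    by simp
  then have "index_mat xs xs m = ?P * index_mat ys ys n * ?Q"
    using carrier by (simp add: assoc_mult_mat PQ)
  then have "similar_mat_wit (index_mat xs xs m) (index_mat ys ys n) ?P ?Q"
    using carrier PQ mat_mult_left_right_inverse[OF carrier(1,2) PQ]
    by (intro similar_mat_witI) auto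
  then show ?thesis
    by (intro char_poly_similar) (auto simp: similar_mat_def)
qed

lemma char_poly_index_mat_append:
  fixes f :: "'a \<Rightarrow> 'a \<Rightarrow> 'b :: idom"
  assumes "\<And>z y. z \<in> set zs \<Longrightarrow> y \<in> set ys \<Longrightarrow> f z y = 0"
  shows "char_poly (index_mat (ys @ zs) (ys @ zs) f)
       = char_poly (index_mat ys ys f) * char_poly (index_mat zs zs f)"
proof -
  let ?n = "length ys" and ?m = "length zs"
  define B where "B = mat ?n ?m (\<lambda>(i, j). f (ys ! i) (zs ! j))"
  have B: "B \<in> carrier_mat ?n ?m" by (simp add: B_def)
  have block: "index_mat (ys @ zs) (ys @ zs) f
      = four_block_mat (index_mat ys ys f) B (0\<^sub>m ?m ?n) (index_mat zs zs f)"
    by (rule eq_matI) (auto simp: index_mat_def B_def nth_append assms)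
  have "char_poly (index_mat (ys @ zs) (ys @ zs) f)
    = det (four_block_mat (char_poly_matrix (index_mat ys ys f)) (map_mat (\<lambda>a. [:- a:]) B)
        (0\<^sub>m ?m ?n) (char_poly_matrix (index_mat zs zs f)))"
    unfolding char_poly_def block
    by (rule arg_cong[where f = det], rule eq_matI)
      (use B in \<open>auto simp: char_poly_matrix_def one_poly_def\<close>)
  also have "\<dots> = det (char_poly_matrix (index_mat ys ys f)) * det (char_poly_matrix (index_mat zs zs f))"
    by (rule det_four_block_mat_lower_left_zero) (use B in auto)
  finally show ?thesis
    unfolding char_poly_def .
qed

text \<open>For infinite \<open>S\<close> the list chosen by \<open>SOME\<close> is arbitrary.\<close>

definition set_char_poly :: "'a set \<Rightarrow> ('a \<Rightarrow> 'a \<Rightarrow> 'b :: comm_ring_1) \<Rightarrow> 'b poly" where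
  "set_char_poly S f = (let xs = SOME xs. distinct xs \<and> set xs = S in char_poly (index_mat xs xs f))"

lemma set_char_poly_index_mat:
  fixes f :: "'a \<Rightarrow> 'a \<Rightarrow> 'b :: field"
  assumes "distinct xs"
  shows "set_char_poly (set xs) f = char_poly (index_mat xs xs f)"
proof -
  define ys where "ys = (SOME ys. distinct ys \<and> set ys = set xs)"
  have "\<exists>ys. distinct ys \<and> set ys = set xs"
    using assms by blast
  then have ys: "distinct ys" "set ys = set xs"
    unfolding ys_def by (metis (mono_tags, lifting) someI_ex)+
  have "char_poly (index_mat ys ys f) = char_poly (index_mat xs xs f)"
  proof (rule char_poly_index_mat_similar[where p = "\<lambda>x y. of_bool (x = y)"
        and q = "\<lambda>x y. of_bool (x = y)"])
    show "length ys = length xs"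
      using distinct_card[OF ys(1)] distinct_card[OF assms] ys(2) by simp
  qed (use ys assms in auto)
  then show ?thesis
    unfolding set_char_poly_def ys_def Let_def .
qed

lemma set_char_poly_nonzero: "set_char_poly S (f :: 'a \<Rightarrow> 'a \<Rightarrow> 'b :: comm_ring_1) \<noteq> 0"
  unfolding set_char_poly_def Let_def by (metis degree_monic_char_poly[OF index_mat_carrier] coeff_0 zero_neq_one)

lemma set_char_poly_similar:
  fixes m n :: "'a \<Rightarrow> 'a \<Rightarrow> 'b :: field"
  assumes "finite S"
    and "\<And>x x'. x \<in> S \<Longrightarrow> x' \<in> S \<Longrightarrow> (\<Sum>y\<in>S. p x y * q y x') = of_bool (x = x')"
    and "\<And>x y. x \<in> S \<Longrightarrow> y \<in> S \<Longrightarrow> (\<Sum>x'\<in>S. m x x' * p x' y) = (\<Sum>y'\<in>S. p x y' * n y' y)"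
  shows "set_char_poly S m = set_char_poly S n"
proof -
  obtain xs where xs: "distinct xs" "set xs = S"
    using finite_distinct_list[OF assms(1)] by blast
  have "char_poly (index_mat xs xs m) = char_poly (index_mat xs xs n)"
    by (rule char_poly_index_mat_similar[where p = p and q = q]) (use xs assms(2,3) in auto)
  then show ?thesis
    unfolding xs(2)[symmetric] set_char_poly_index_mat[OF xs(1)] .
qed

lemma set_char_poly_cong:
  fixes f g :: "'a \<Rightarrow> 'a \<Rightarrow> 'b :: field"
  assumes "finite S" and "\<And>x y. x \<in> S \<Longrightarrow> y \<in> S \<Longrightarrow> f x y = g x y"
  shows "set_char_poly S f = set_char_poly S g"
proof -
  obtain xs where xs: "distinct xs" "set xs = S"
    using finite_distinct_list[OF assms(1)] by blast
  moreover have "index_mat xs xs f = index_mat xs xs g"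
    by (rule index_mat_cong) (use assms(2) xs(2) in auto)
  ultimately show ?thesis
    unfolding xs(2)[symmetric] set_char_poly_index_mat[OF xs(1)] by simp
qed

lemma set_char_poly_reindex:
  fixes f :: "'a \<Rightarrow> 'a \<Rightarrow> 'b :: field"
  assumes "finite T" and "inj_on h T"
  shows "set_char_poly (h ` T) f = set_char_poly T (\<lambda>u v. f (h u) (h v))"
proof -
  obtain ys where ys: "distinct ys" "set ys = T"
    using finite_distinct_list[OF assms(1)] by blast
  have "distinct (map h ys)"
    using ys assms(2) by (simp add: distinct_map)
  show ?thesis
    unfolding ys(2)[symmetric] set_char_poly_index_mat[OF ys(1)] list.set_map[symmetric]
      set_char_poly_index_mat[OF \<open>distinct (map h ys)\<close>] index_mat_map ..
qed

lemma set_char_poly_Un: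
  fixes f :: "'a \<Rightarrow> 'a \<Rightarrow> 'b :: field"
  assumes "finite A" "finite B" "A \<inter> B = {}"
    and "\<And>z y. z \<in> B \<Longrightarrow> y \<in> A \<Longrightarrow> f z y = 0"
  shows "set_char_poly (A \<union> B) f = set_char_poly A f * set_char_poly B f"
proof -
  obtain xs ys where xs: "distinct xs" "set xs = A" and ys: "distinct ys" "set ys = B"
    using finite_distinct_list[OF assms(1)] finite_distinct_list[OF assms(2)] by metis
  have "distinct (xs @ ys)"
    using xs ys assms(3) by auto
  show ?thesis
    unfolding xs(2)[symmetric] ys(2)[symmetric] set_append[symmetric]
      set_char_poly_index_mat[OF \<open>distinct (xs @ ys)\<close>] set_char_poly_index_mat[OF xs(1)]
      set_char_poly_index_mat[OF ys(1)]
    by (rule char_poly_index_mat_append) (use xs ys assms(4) in auto)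
qed

lemma dirichlet_spec_set_char_poly:
  "dirichlet_spec V E src tgt w \<alpha> W = proots (set_char_poly (V - W) (lap_coeff E src tgt w \<alpha>))"
  unfolding dirichlet_spec_def dirichlet_lap_mat_def set_char_poly_def index_mat_def Let_def ..

section \<open>Block structure of the Laplacian of a frame member\<close>

text \<open>A frame member in which the vertices of \<open>U\<close> are glued and those of \<open>W\<close> are copied \<open>a\<close>
  times has the vertices \<open>frame_index U W a\<close>. If \<open>L\<close> is the Laplacian of the graph and \<open>G\<close> the
  set of glued vertices, its Laplacian is \<open>frame_lift G a L\<close>: a glued vertex has \<open>a\<close> times its
  degree and one edge to each copy of a neighbour, and distinct copies are not adjacent.\<close>

definition frame_index :: "'a set \<Rightarrow> 'a set \<Rightarrow> nat \<Rightarrow> ('a \<times> nat) set" where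
  "frame_index U W a = U \<times> {1} \<union> W \<times> {1..a}"

definition frame_lift ::
    "'a set \<Rightarrow> nat \<Rightarrow> ('a \<Rightarrow> 'a \<Rightarrow> 'b :: field) \<Rightarrow> 'a \<times> nat \<Rightarrow> 'a \<times> nat \<Rightarrow> 'b" where
  "frame_lift G a L = (\<lambda>(x, i) (y, k).
     if x \<in> G \<and> y \<notin> G then L x y / of_nat a
     else if x \<notin> G \<and> y \<notin> G \<and> i \<noteq> k then 0
     else L x y)"

text \<open>The column of \<open>(y, 1)\<close>, \<open>y \<notin> G\<close>, is the sum of all copies of \<open>y\<close>; all other columns
  are unit vectors. In this basis \<open>frame_lift G a L\<close> becomes \<open>frame_split G a L\<close>.\<close>

definition frame_basis :: "'a \<times> nat \<Rightarrow> 'a \<times> nat \<Rightarrow> 'b :: zero_neq_one" where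
  "frame_basis p q = of_bool (fst p = fst q \<and> (snd p = snd q \<or> 2 \<le> snd p \<and> snd q = 1))"

definition frame_split ::
    "'a set \<Rightarrow> nat \<Rightarrow> ('a \<Rightarrow> 'a \<Rightarrow> 'b :: field) \<Rightarrow> 'a \<times> nat \<Rightarrow> 'a \<times> nat \<Rightarrow> 'b" where
  "frame_split G a L = (\<lambda>(x, i) (y, k).
     if 2 \<le> i then (if k = i then L x y else 0)
     else if 2 \<le> k then (if x \<in> G then L x y / of_nat a else 0)
     else L x y)"

lemma sum_frame_basis_left:
  fixes g :: "'a \<times> nat \<Rightarrow> 'b :: semiring_1"
  assumes "finite U" "finite W" "p \<in> frame_index U W a"
  shows "(\<Sum>q\<in>frame_index U W a. frame_basis p q * g q)
       = (if 2 \<le> snd p then g p + g (fst p, 1) else g p)"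
proof -
  have "frame_index U W a \<inter> {q. fst p = fst q \<and> (snd p = snd q \<or> 2 \<le> snd p \<and> snd q = 1)}
      = (if 2 \<le> snd p then {p, (fst p, 1)} else {p})"
    using assms(3) by (cases p) (auto simp: frame_index_def)
  then show ?thesis
    using assms(1,2) by (cases p) (auto simp: frame_basis_def frame_index_def)
qed

lemma sum_frame_basis_right:
  fixes g :: "'a \<times> nat \<Rightarrow> 'b :: semiring_1"
  assumes "finite U" "finite W" "U \<inter> W = {}" "r \<in> frame_index U W a"
  shows "(\<Sum>q\<in>frame_index U W a. g q * frame_basis q r)
       = (if fst r \<in> W \<and> snd r = 1 then (\<Sum>l=1..a. g (fst r, l)) else g r)"
proof -
  have "frame_index U W a \<inter> {q. fst q = fst r \<and> (snd q = snd r \<or> 2 \<le> snd q \<and> snd r = 1)}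
      = {fst r} \<times> (if fst r \<in> W \<and> snd r = 1 then {1..a} else {snd r})"
    using assms(3,4) by (cases r) (auto simp: frame_index_def)
  then show ?thesis
    using assms(1,2) by (simp add: frame_basis_def frame_index_def sum.cartesian_product')
qed

lemma sum_frame_lift_copies:
  fixes L :: "'a \<Rightarrow> 'a \<Rightarrow> 'b :: field_char_0"
  assumes "y \<notin> G" "x \<notin> G \<Longrightarrow> i \<in> {1..a}" "a \<ge> 1"
  shows "(\<Sum>l=1..a. frame_lift G a L (x, i) (y, l)) = L x y"
proof (cases "x \<in> G")
  case True
  then show ?thesis
    using assms(1,3) by (simp add: frame_lift_def)
next
  case False
  then have "(\<Sum>l=1..a. frame_lift G a L (x, i) (y, l)) = (\<Sum>l=1..a. if l = i then L x y else 0)"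
    using assms(1) by (intro sum.cong) (auto simp: frame_lift_def)
  also have "\<dots> = L x y"
    using False assms(2) by auto
  finally show ?thesis .
qed

lemma set_char_poly_frame_lift_split:
  fixes L :: "'a \<Rightarrow> 'a \<Rightarrow> 'b :: field_char_0"
  assumes "finite U" "finite W" "U \<subseteq> G" "W \<inter> G = {}" "a \<ge> 1"
  shows "set_char_poly (frame_index U W a) (frame_lift G a L)
       = set_char_poly (frame_index U W a) (frame_split G a L)"
proof (rule set_char_poly_similar[where p = frame_basis
      and q = "\<lambda>p q. of_bool (p = q) - of_bool (fst p = fst q \<and> 2 \<le> snd p \<and> snd q = 1)"])
  let ?S = "frame_index U W a"
  have disjoint: "U \<inter> W = {}"
    using assms(3,4) by auto
  have cases: "(x \<in> G \<and> i = 1) \<or> (x \<in> W \<and> x \<notin> G \<and> i \<in> {1..a})" if "(x, i) \<in> ?S" for x i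
    using that assms(3,4) by (auto simp: frame_index_def)
  show "finite ?S"
    using assms(1,2) by (simp add: frame_index_def)
  fix p r assume p: "p \<in> ?S" and r: "r \<in> ?S"
  show "(\<Sum>q\<in>?S. frame_basis p q *
      (of_bool (q = r) - of_bool (fst q = fst r \<and> 2 \<le> snd q \<and> snd r = 1))) = (of_bool (p = r) :: 'b)"
    unfolding sum_frame_basis_left[OF assms(1,2) p] by (cases p; cases r) auto
  obtain x i y k where xy: "p = (x, i)" "r = (y, k)"
    by fastforce
  show "(\<Sum>q\<in>?S. frame_lift G a L p q * frame_basis q r)
      = (\<Sum>q\<in>?S. frame_basis p q * frame_split G a L q r)"
    unfolding sum_frame_basis_left[OF assms(1,2) p] sum_frame_basis_right[OF assms(1,2) disjoint r]
    using cases[of x i] cases[of y k] p r sum_frame_lift_copies[of y G x i a L] assms(4,5)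
    by (auto simp: xy frame_lift_def frame_split_def)
qed

lemma set_char_poly_frame_split_copy:
  fixes L :: "'a \<Rightarrow> 'a \<Rightarrow> 'b :: field"
  assumes "finite X" "k \<noteq> 0"
  shows "set_char_poly (X \<times> {k}) (frame_split G a L) = set_char_poly X L"
proof -
  have "X \<times> {k} = (\<lambda>x. (x, k)) ` X"
    by auto
  also have "set_char_poly \<dots> (frame_split G a L) = set_char_poly X (\<lambda>x y. frame_split G a L (x, k) (y, k))"
    by (rule set_char_poly_reindex) (use assms(1) in \<open>auto simp: inj_on_def\<close>)
  also have "\<dots> = set_char_poly X L"
    using assms by (intro set_char_poly_cong) (auto simp: frame_split_def)
  finally show ?thesis .
qed

lemma set_char_poly_frame_split:
  fixes L :: "'a \<Rightarrow> 'a \<Rightarrow> 'b :: field"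
  assumes "finite U" "finite W" "a \<ge> 1"
  shows "set_char_poly (frame_index U W a) (frame_split G a L)
       = set_char_poly (U \<union> W) L * set_char_poly W L ^ (a - 1)"
proof -
  have "set_char_poly ((U \<union> W) \<times> {1} \<union> W \<times> {2..n}) (frame_split G a L)
      = set_char_poly (U \<union> W) L * set_char_poly W L ^ (n - 1)" for n
  proof (induction n)
    case 0
    then show ?case
      using set_char_poly_frame_split_copy[of "U \<union> W" 1 G a L] assms(1,2) by simp
  next
    case (Suc n)
    show ?case
    proof (cases "n = 0")
      case True
      then show ?thesis
        using set_char_poly_frame_split_copy[of "U \<union> W" 1 G a L] assms(1,2) by simp
    next
      case False
      then have "(U \<union> W) \<times> {1} \<union> W \<times> {2..Suc n} = ((U \<union> W) \<times> {1} \<union> W \<times> {2..n}) \<union> W \<times> {Suc n}"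
        by auto
      moreover have "set_char_poly (((U \<union> W) \<times> {1} \<union> W \<times> {2..n}) \<union> W \<times> {Suc n}) (frame_split G a L)
          = set_char_poly ((U \<union> W) \<times> {1} \<union> W \<times> {2..n}) (frame_split G a L)
            * set_char_poly (W \<times> {Suc n}) (frame_split G a L)"
        using assms(1,2) False by (intro set_char_poly_Un) (auto simp: frame_split_def)
      ultimately show ?thesis
        using Suc.IH set_char_poly_frame_split_copy[of W "Suc n" G a L] assms(2) False
          power_minus_mult[of n "set_char_poly W L"]
        by (simp add: mult.assoc)
    qed
  qed
  moreover have "frame_index U W a = (U \<union> W) \<times> {1} \<union> W \<times> {2..a}"
    using assms(3) by (auto simp: frame_index_def)
  ultimately show ?thesis
    by simp
qed

lemma set_char_poly_frame_lift:
  fixes L :: "'a \<Rightarrow> 'a \<Rightarrow> 'b :: field_char_0"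
  assumes "finite U" "finite W" "U \<subseteq> G" "W \<inter> G = {}" "a \<ge> 1"
  shows "set_char_poly (frame_index U W a) (frame_lift G a L)
       = set_char_poly (U \<union> W) L * set_char_poly W L ^ (a - 1)"
  by (rule trans[OF set_char_poly_frame_lift_split[OF assms] set_char_poly_frame_split[OF assms(1,2,5)]])

section \<open>Frame members of magnetic graphs\<close>

lemma frame_cls_eq_iff:
  assumes "x \<in> V" "y \<in> V" "j \<in> {1..a}" "k \<in> {1..a}"
  shows "frame_cls V V0 a (x, j) = frame_cls V V0 a (y, k) \<longleftrightarrow> x = y \<and> (x \<in> V0 \<or> j = k)"
proof
  assume "frame_cls V V0 a (x, j) = frame_cls V V0 a (y, k)"
  moreover have "(x, j) \<in> frame_cls V V0 a (x, j)"
    using assms by (simp add: frame_cls_def frame_rel_def)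
  ultimately show "x = y \<and> (x \<in> V0 \<or> j = k)"
    by (auto simp: frame_cls_def frame_rel_def)
qed (use assms in \<open>auto simp: frame_cls_def frame_rel_def\<close>)

lemma frame_V_diff_frame_virt:
  assumes "V1 \<subseteq> V0" "V0 \<subseteq> V" "a \<ge> 1"
  shows "frame_V V V0 a - frame_virt V V0 a V1 = frame_cls V V0 a ` frame_index (V0 - V1) (V - V0) a"
proof -
  have frame_V: "frame_V V V0 a = frame_cls V V0 a ` (V \<times> {1..a})"
    unfolding frame_V_def quotient_def frame_cls_def by auto
  have virt: "frame_cls V V0 a (x, j) \<in> frame_virt V V0 a V1 \<longleftrightarrow> x \<in> V1"
    if "x \<in> V" "j \<in> {1..a}" for x j
    using that assms frame_cls_eq_iff[OF that(1) _ that(2)] by (auto simp: frame_virt_def)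
  show ?thesis
  proof (intro equalityI subsetI)
    fix X assume "X \<in> frame_V V V0 a - frame_virt V V0 a V1"
    then obtain x j where x: "x \<in> V" "j \<in> {1..a}" "x \<notin> V1" and X: "X = frame_cls V V0 a (x, j)"
      unfolding frame_V using virt by auto
    show "X \<in> frame_cls V V0 a ` frame_index (V0 - V1) (V - V0) a"
    proof (cases "x \<in> V0")
      case True
      then have "X = frame_cls V V0 a (x, 1)"
        using X x assms(3) frame_cls_eq_iff[of x V x j a 1 V0] by auto
      then show ?thesis
        using True x(3) by (auto simp: frame_index_def)
    qed (use X x in \<open>auto simp: frame_index_def\<close>)
  next
    fix X assume "X \<in> frame_cls V V0 a ` frame_index (V0 - V1) (V - V0) a"
    then show "X \<in> frame_V V V0 a - frame_virt V V0 a V1"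
      unfolding frame_V using virt assms by (auto simp: frame_index_def)
  qed
qed

lemma inj_on_frame_cls:
  assumes "V0 \<subseteq> V" "a \<ge> 1"
  shows "inj_on (frame_cls V V0 a) (frame_index (V0 - V1) (V - V0) a)"
proof (rule inj_onI)
  fix p q assume "p \<in> frame_index (V0 - V1) (V - V0) a" "q \<in> frame_index (V0 - V1) (V - V0) a"
    and "frame_cls V V0 a p = frame_cls V V0 a q"
  moreover from calculation have "fst p \<in> V" "fst q \<in> V" "snd p \<in> {1..a}" "snd q \<in> {1..a}"
    using assms by (auto simp: frame_index_def)
  ultimately show "p = q"
    using frame_cls_eq_iff[of "fst p" V "fst q" "snd p" a "snd q" V0] by (auto simp: frame_index_def)
qed

lemma frame_inc_eq_frame_cls_iff:
  assumes "s e \<in> V" "j \<in> {1..a}" "x \<in> V" "i \<in> {1..a}"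
  shows "frame_inc V V0 a s (e, j) = frame_cls V V0 a (x, i) \<longleftrightarrow> s e = x \<and> (x \<in> V0 \<or> j = i)"
  using frame_cls_eq_iff[OF assms(1,3,2,4)] by (auto simp: frame_inc_def)

lemma frame_edges_between:
  fixes E :: "'e set"
  assumes "src ` E \<subseteq> V" "tgt ` E \<subseteq> V" "x \<in> V" "y \<in> V" "i \<in> {1..a}" "k \<in> {1..a}"
  shows "{ej \<in> frame_E E a. frame_inc V V0 a src ej = frame_cls V V0 a (x, i)
                           \<and> frame_inc V V0 a tgt ej = frame_cls V V0 a (y, k)}
       = {e \<in> E. src e = x \<and> tgt e = y} \<times> {j \<in> {1..a}. (x \<in> V0 \<or> j = i) \<and> (y \<in> V0 \<or> j = k)}"
proof (rule Set.set_eqI)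
  fix ej :: "'e \<times> nat"
  obtain e j where ej: "ej = (e, j)"
    by fastforce
  show "ej \<in> {ej \<in> frame_E E a. frame_inc V V0 a src ej = frame_cls V V0 a (x, i)
                           \<and> frame_inc V V0 a tgt ej = frame_cls V V0 a (y, k)}
    \<longleftrightarrow> ej \<in> {e \<in> E. src e = x \<and> tgt e = y} \<times> {j \<in> {1..a}. (x \<in> V0 \<or> j = i) \<and> (y \<in> V0 \<or> j = k)}"
  proof (cases "e \<in> E \<and> j \<in> {1..a}")
    case True
    then have "src e \<in> V" "tgt e \<in> V"
      using assms(1,2) by auto
    then show ?thesis
      using True assms(3-6) by (auto simp: ej frame_E_def frame_inc_eq_frame_cls_iff)
  qed (auto simp: ej frame_E_def)
qed

lemma frame_edges_from:
  fixes E :: "'e set"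
  assumes "src ` E \<subseteq> V" "x \<in> V" "i \<in> {1..a}"
  shows "{ej \<in> frame_E E a. frame_inc V V0 a src ej = frame_cls V V0 a (x, i)}
       = {e \<in> E. src e = x} \<times> {j \<in> {1..a}. x \<in> V0 \<or> j = i}"
proof (rule Set.set_eqI)
  fix ej :: "'e \<times> nat"
  obtain e j where ej: "ej = (e, j)"
    by fastforce
  show "ej \<in> {ej \<in> frame_E E a. frame_inc V V0 a src ej = frame_cls V V0 a (x, i)}
    \<longleftrightarrow> ej \<in> {e \<in> E. src e = x} \<times> {j \<in> {1..a}. x \<in> V0 \<or> j = i}"
  proof (cases "e \<in> E \<and> j \<in> {1..a}")
    case True
    then have "src e \<in> V"
      using assms(1) by auto
    then show ?thesis
      using True assms(2,3) by (simp add: ej frame_E_def frame_inc_eq_frame_cls_iff)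
  qed (auto simp: ej frame_E_def)
qed

lemma sum_cartesian_fst:
  "(\<Sum>ej\<in>A \<times> J. f (fst ej)) = of_nat (card J) * (\<Sum>e\<in>A. f e :: 'a :: comm_semiring_1)"
  by (simp add: sum.cartesian_product' sum_distrib_left)

lemma lap_coeff_frame_cls:
  fixes E :: "'e set"
  assumes "finite E" "src ` E \<subseteq> V" "tgt ` E \<subseteq> V"
    and "x \<in> V" "y \<in> V" "i \<in> {1..a}" "k \<in> {1..a}"
  shows "lap_coeff (frame_E E a) (frame_inc V V0 a src) (frame_inc V V0 a tgt) (frame_fun w) (frame_fun \<alpha>)
           (frame_cls V V0 a (x, i)) (frame_cls V V0 a (y, k))
       = of_bool (frame_cls V V0 a (x, i) = frame_cls V V0 a (y, k))
         - of_nat (card {j \<in> {1..a}. (x \<in> V0 \<or> j = i) \<and> (y \<in> V0 \<or> j = k)})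
           / of_nat (card {j \<in> {1..a}. x \<in> V0 \<or> j = i})
           * (of_bool (x = y) - lap_coeff E src tgt w \<alpha> x y)"
proof -
  have frame_fun: "frame_fun f = (\<lambda>ej. f (fst ej))" for f :: "'e \<Rightarrow> real"
    by (auto simp: frame_fun_def)
  have "wdeg (frame_E E a) (frame_inc V V0 a src) (frame_fun w) (frame_cls V V0 a (x, i))
      = of_nat (card {j \<in> {1..a}. x \<in> V0 \<or> j = i}) * wdeg E src w x"
    unfolding wdeg_def frame_edges_from[OF assms(2,4,6)] frame_fun sum_cartesian_fst ..
  moreover have "(\<Sum>ej\<in>{ej \<in> frame_E E a. frame_inc V V0 a src ej = frame_cls V V0 a (x, i)
                           \<and> frame_inc V V0 a tgt ej = frame_cls V V0 a (y, k)}.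
        complex_of_real (frame_fun w ej) * cis (frame_fun \<alpha> ej))
      = of_nat (card {j \<in> {1..a}. (x \<in> V0 \<or> j = i) \<and> (y \<in> V0 \<or> j = k)})
        * (\<Sum>e\<in>{e \<in> E. src e = x \<and> tgt e = y}. complex_of_real (w e) * cis (\<alpha> e))"
    unfolding frame_edges_between[OF assms(2-7)] frame_fun
    by (rule sum_cartesian_fst[where f = "\<lambda>e. complex_of_real (w e) * cis (\<alpha> e)"])
  ultimately show ?thesis
    unfolding lap_coeff_def by simp
qed

lemma lap_coeff_frame_cls_eq_frame_lift:
  fixes E :: "'e set"
  assumes "finite E" "src ` E \<subseteq> V" "tgt ` E \<subseteq> V" "V0 \<subseteq> V" "a \<ge> 1"
    and "p \<in> frame_index (V0 - V1) (V - V0) a" "q \<in> frame_index (V0 - V1) (V - V0) a"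
  shows "lap_coeff (frame_E E a) (frame_inc V V0 a src) (frame_inc V V0 a tgt) (frame_fun w) (frame_fun \<alpha>)
           (frame_cls V V0 a p) (frame_cls V V0 a q)
       = frame_lift V0 a (lap_coeff E src tgt w \<alpha>) p q"
proof -
  obtain x i y k where pq: "p = (x, i)" "q = (y, k)"
    by fastforce
  have x: "x \<in> V" "i \<in> {1..a}" "x \<in> V0 \<Longrightarrow> i = 1" and y: "y \<in> V" "k \<in> {1..a}" "y \<in> V0 \<Longrightarrow> k = 1"
    using assms(4-7) pq by (auto simp: frame_index_def)
  have "frame_cls V V0 a (x, i) = frame_cls V V0 a (y, k) \<longleftrightarrow> (x, i) = (y, k)"
    using frame_cls_eq_iff[of x V y i a k V0] x y by auto
  moreover have "{j \<in> {1..a}. x \<in> V0 \<or> j = i} = (if x \<in> V0 then {1..a} else {i})"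
    using x(2) by auto
  moreover have "{j \<in> {1..a}. (x \<in> V0 \<or> j = i) \<and> (y \<in> V0 \<or> j = k)}
      = (if x \<in> V0 then (if y \<in> V0 then {1..a} else {k}) else if y \<in> V0 \<or> k = i then {i} else {})"
    using x(2) y(2) by auto
  ultimately show ?thesis
    unfolding pq lap_coeff_frame_cls[OF assms(1-3) x(1) y(1) x(2) y(2)]
    using assms(5) x(3) y(3) by (cases "x \<in> V0"; cases "y \<in> V0") (auto simp: frame_lift_def)
qed

theorem proposition4p5:
  fixes V :: "'v set" and E :: "'e set" and src tgt :: "'e \<Rightarrow> 'v" and flip :: "'e \<Rightarrow> 'e"
    and w \<alpha> :: "'e \<Rightarrow> real" and V0 V1 :: "'v set" and a :: nat
  assumes "magnetic_graph V E src tgt flip w \<alpha>"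
    and "V1 \<subseteq> V0" and "V0 \<subseteq> V"
    and "a \<ge> 1"
  shows "frame_spec V E src tgt w \<alpha> V1 V0 a
         = dirichlet_spec V E src tgt w \<alpha> V1 + mset_scale (a - 1) (dirichlet_spec V E src tgt w \<alpha> V0)"
proof -
  let ?R = "frame_index (V0 - V1) (V - V0) a"
  let ?L = "lap_coeff E src tgt w \<alpha>"
  let ?F = "lap_coeff (frame_E E a) (frame_inc V V0 a src) (frame_inc V V0 a tgt) (frame_fun w) (frame_fun \<alpha>)"
  have graph: "finite V" "finite E" "src ` E \<subseteq> V" "tgt ` E \<subseteq> V"
    using assms(1) by (auto simp: magnetic_graph_def)
  have R: "finite ?R"
    using graph(1) assms(3) by (auto simp: frame_index_def intro: finite_subset)
  have "frame_spec V E src tgt w \<alpha> V1 V0 a = proots (set_char_poly (frame_cls V V0 a ` ?R) ?F)"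
    unfolding frame_spec_def dirichlet_spec_set_char_poly frame_V_diff_frame_virt[OF assms(2-4)] ..
  also have "\<dots> = proots (set_char_poly ?R (\<lambda>p q. ?F (frame_cls V V0 a p) (frame_cls V V0 a q)))"
    unfolding set_char_poly_reindex[OF R inj_on_frame_cls[OF assms(3,4)]] ..
  also have "\<dots> = proots (set_char_poly ?R (frame_lift V0 a ?L))"
    by (rule arg_cong[where f = proots], rule set_char_poly_cong[OF R],
        rule lap_coeff_frame_cls_eq_frame_lift[OF graph(2-4) assms(3,4)])
  also have "\<dots> = proots (set_char_poly (V - V1) ?L * set_char_poly (V - V0) ?L ^ (a - 1))"
  proof -
    have "finite (V0 - V1)" "(V0 - V1) \<union> (V - V0) = V - V1" "(V - V0) \<inter> V0 = {}"
      using graph(1) assms(2,3) by (auto intro: finite_subset)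
    then show ?thesis
      using set_char_poly_frame_lift[of "V0 - V1" "V - V0" V0 a ?L] graph(1) assms(4)
      by (simp add: frame_index_def)
  qed
  also have "\<dots> = dirichlet_spec V E src tgt w \<alpha> V1 + mset_scale (a - 1) (dirichlet_spec V E src tgt w \<alpha> V0)"
    unfolding dirichlet_spec_set_char_poly mset_scale_def
    by (simp add: proots_mult proots_power set_char_poly_nonzero)
  finally show ?thesis .
qed

end
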